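(* Let $C\in M_n(\mathbb{C})$ be a contraction and $d=\operatorname{rank}(I-C^*C)$. Then every level of the partial isometry tower of $C$ has the Circularity property if and only if $T_1,T_2,\dots,T_{d+1}$ have the Circularity property. Moreover, it is also equivalent that $T_0,T_1,\dots,T_d$ have the Circularity property.
   Context: For $X\in M_n(\mathbb{C})$, $H_X(\theta):=\frac12(e^{-i\theta}X+e^{i\theta}X^* )$; $X$ has the Circularity property if the spectrum of $H_X(\theta)$ is independent of $\theta\in\mathbb{R}$. A contraction is a matrix with $\|C\|\le1$. For a contraction $C$: $D_C=I-C^*C$, $d=\operatorname{rank}D_C$, $B_C$ is a $d\times n$ matrix of full row rank with $B_C^*B_C=D_C$ (matrix of $D_C^{1/2}$ on $\operatorname{Im}D_C$, zero on its complement), $\mathcal{A}(C)=\begin{bmatrix}0&B_C\\0&C\end{bmatrix}$, and the partial isometry tower is $T_0=C$, $T_{j+1}=\mathcal{A}(T_j)$. *)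

theory Defs
  imports Complex_Main "Jordan_Normal_Form.Schur_Decomposition" "Jordan_Normal_Form.DL_Rank"
begin

definition vnorm :: "complex vec \<Rightarrow> real" where
  "vnorm v = sqrt (\<Sum>i<dim_vec v. (cmod (v $ i))\<^sup>2)"

definition contraction :: "complex mat \<Rightarrow> bool" where
  "contraction C \<longleftrightarrow> (\<forall>v \<in> carrier_vec (dim_col C). vnorm (C *\<^sub>v v) \<le> vnorm v)"

definition Hmat :: "complex mat \<Rightarrow> real \<Rightarrow> complex mat" where
  "Hmat X \<theta> = (1/2) \<cdot>\<^sub>m (exp (- \<i> * of_real \<theta>) \<cdot>\<^sub>m X + exp (\<i> * of_real \<theta>) \<cdot>\<^sub>m mat_adjoint X)"

definition spectrum_mat :: "complex mat \<Rightarrow> complex set" where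
  "spectrum_mat A = {k. eigenvalue A k}"

definition circularity :: "complex mat \<Rightarrow> bool" where
  "circularity X \<longleftrightarrow> (\<forall>\<theta> \<theta>'. spectrum_mat (Hmat X \<theta>) = spectrum_mat (Hmat X \<theta>'))"

definition defect :: "complex mat \<Rightarrow> complex mat" where
  "defect C = 1\<^sub>m (dim_col C) - mat_adjoint C * C"

definition is_B :: "complex mat \<Rightarrow> complex mat \<Rightarrow> bool" where
  "is_B C B \<longleftrightarrow> (let d = vec_space.rank (dim_col C) (defect C) in
     B \<in> carrier_mat d (dim_col C) \<and> vec_space.rank d B = d \<and> mat_adjoint B * B = defect C)"

definition A_op :: "complex mat \<Rightarrow> complex mat \<Rightarrow> complex mat" where
  "A_op B C = four_block_mat (0\<^sub>m (dim_row B) (dim_row B)) B (0\<^sub>m (dim_row C) (dim_row B)) C"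

definition is_tower :: "complex mat \<Rightarrow> (nat \<Rightarrow> complex mat) \<Rightarrow> bool" where
  "is_tower C T \<longleftrightarrow> T 0 = C \<and> (\<forall>j. \<exists>B. is_B (T j) B \<and> T (Suc j) = A_op B (T j))"

end

theory Submission
  imports Defs
begin

(* Write G_X(theta, l, a) = det (l I - H_X(theta) - a D_X). A matrix X is circular iff
   G_X(theta, l, 0), the characteristic polynomial of H_X(theta), does not depend on theta.
   The defect of A(Y) is the projection onto the new coordinates and B^* B = D_Y, so a Schur
   complement gives G_{A(Y)}(theta, l, a) = (l - a)^m G_Y(theta, l, 1/(4 (l - a))). Iterating
   down the tower, for real l = r >= 1 the circularity of T_j amounts to the theta-independence
   of G_C(theta, r, t_j), where t_j = f_r^j(0) and f_r(t) = 1/(4 (r - t)). But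
   G_C(theta, r, t) = det (r I - H_C(theta) - t B^* B) is a polynomial of degree at most
   d = rank D_C in t, and the points t_j increase strictly with j; so theta-independence at any
   d + 1 of them forces it at all of them. *)

lemma smult_smult_mat: "a \<cdot>\<^sub>m (b \<cdot>\<^sub>m A) = (a * b) \<cdot>\<^sub>m (A :: 'a :: semigroup_mult mat)"
  by (rule eq_matI) (auto simp: mult.assoc)

lemma one_smult_mat [simp]: "(1 :: 'a :: monoid_mult) \<cdot>\<^sub>m A = A"
  by (rule eq_matI) auto

lemma det_four_block_mat_scalar_upper_left:
  fixes D :: "'a :: field mat"
  assumes D: "D \<in> carrier_mat n n" and B: "B \<in> carrier_mat m n" and C: "C \<in> carrier_mat n m"
    and "\<alpha> \<noteq> 0"
  shows "det (four_block_mat (\<alpha> \<cdot>\<^sub>m 1\<^sub>m m) B C D) = \<alpha> ^ m * det (D - (1 / \<alpha>) \<cdot>\<^sub>m (C * B))"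
proof -
  let ?S = "D - (1 / \<alpha>) \<cdot>\<^sub>m (C * B)"
  let ?L = "four_block_mat (\<alpha> \<cdot>\<^sub>m 1\<^sub>m m) (0\<^sub>m m n) C (1\<^sub>m n)"
  let ?R = "four_block_mat (1\<^sub>m m) ((1 / \<alpha>) \<cdot>\<^sub>m B) (0\<^sub>m n m) ?S"
  have S: "?S \<in> carrier_mat n n" using D B C by auto
  have "?L * ?R = four_block_mat (\<alpha> \<cdot>\<^sub>m 1\<^sub>m m * 1\<^sub>m m + 0\<^sub>m m n * 0\<^sub>m n m)
      (\<alpha> \<cdot>\<^sub>m 1\<^sub>m m * ((1 / \<alpha>) \<cdot>\<^sub>m B) + 0\<^sub>m m n * ?S)
      (C * 1\<^sub>m m + 1\<^sub>m n * 0\<^sub>m n m) (C * ((1 / \<alpha>) \<cdot>\<^sub>m B) + 1\<^sub>m n * ?S)"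
    by (rule mult_four_block_mat[of _ m m _ n _ n _ _ m _ n]) (use S B C in auto)
  also have "\<dots> = four_block_mat (\<alpha> \<cdot>\<^sub>m 1\<^sub>m m) B C D"
  proof (rule cong_four_block_mat)
    have "\<alpha> \<cdot>\<^sub>m 1\<^sub>m m * ((1 / \<alpha>) \<cdot>\<^sub>m B) = \<alpha> \<cdot>\<^sub>m ((1 / \<alpha>) \<cdot>\<^sub>m B)"
      using B by (simp add: mult_smult_assoc_mat[of _ m m _ n])
    then show "\<alpha> \<cdot>\<^sub>m 1\<^sub>m m * ((1 / \<alpha>) \<cdot>\<^sub>m B) + 0\<^sub>m m n * ?S = B"
      using B S \<open>\<alpha> \<noteq> 0\<close> by (simp add: smult_smult_mat left_mult_zero_mat[OF S])
    have "C * ((1 / \<alpha>) \<cdot>\<^sub>m B) = (1 / \<alpha>) \<cdot>\<^sub>m (C * B)"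
      using B C by (simp add: mult_smult_distrib)
    then show "C * ((1 / \<alpha>) \<cdot>\<^sub>m B) + 1\<^sub>m n * ?S = D"
      using D B C by (intro eq_matI) auto
  qed (use C in auto)
  finally have factor: "four_block_mat (\<alpha> \<cdot>\<^sub>m 1\<^sub>m m) B C D = ?L * ?R" ..
  have "det ?L = \<alpha> ^ m"
    by (subst det_four_block_mat_upper_right_zero[of _ m _ n]) (use C in auto)
  moreover have "det ?R = det ?S"
    by (subst det_four_block_mat_lower_left_zero[of _ m _ n]) (use B S in auto)
  ultimately show ?thesis
    unfolding factor by (subst det_mult[of _ "m + n"]) (use B C S in auto)
qed

lemma dim_row_mat_adjoint [simp]: "dim_row (mat_adjoint A) = dim_col A"
  and dim_col_mat_adjoint [simp]: "dim_col (mat_adjoint A) = dim_row A"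
  unfolding mat_adjoint_def by auto

lemma mat_adjoint_carrier_mat [simp]: "A \<in> carrier_mat m n \<Longrightarrow> mat_adjoint A \<in> carrier_mat n m"
  unfolding carrier_mat_def by auto

lemma index_mat_adjoint [simp]:
  "i < dim_col A \<Longrightarrow> j < dim_row A \<Longrightarrow> mat_adjoint A $$ (i, j) = conjugate (A $$ (j, i))"
  unfolding mat_adjoint_def by (auto simp: mat_of_rows_index)

lemma mat_adjoint_zero_mat [simp]: "mat_adjoint (0\<^sub>m m n) = 0\<^sub>m n m"
  by (rule eq_matI) auto

lemma mat_adjoint_four_block_mat:
  assumes "A \<in> carrier_mat m1 n1" "B \<in> carrier_mat m1 n2" "C \<in> carrier_mat m2 n1" "D \<in> carrier_mat m2 n2"
  shows "mat_adjoint (four_block_mat A B C D) =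
    four_block_mat (mat_adjoint A) (mat_adjoint C) (mat_adjoint B) (mat_adjoint D)"
  by (rule eq_matI) (use assms in auto)

lemma degree_det_lower_left_linear_le:
  fixes P :: "'a :: idom poly mat"
  assumes P: "P \<in> carrier_mat n n"
    and deg: "\<And>i j. i < n \<Longrightarrow> j < n \<Longrightarrow> degree (P $$ (i, j)) \<le> (if d \<le> i \<and> j < d then 1 else 0)"
  shows "degree (det P) \<le> d"
  unfolding det_def'[OF P]
proof (rule degree_sum_le)
  fix p assume "p \<in> {p. p permutes {0..<n}}"
  then have p: "p permutes {0..<n}" by simp
  have "degree (signof p * (\<Prod>i = 0..<n. P $$ (i, p i))) \<le> degree (\<Prod>i = 0..<n. P $$ (i, p i))"
    using degree_mult_le[of "signof p" "\<Prod>i = 0..<n. P $$ (i, p i)"] by simp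
  also have "\<dots> \<le> (\<Sum>i = 0..<n. degree (P $$ (i, p i)))"
    using degree_prod_sum_le[of "{0..<n}" "\<lambda>i. P $$ (i, p i)"] by (simp add: o_def)
  also have "\<dots> \<le> (\<Sum>i = 0..<n. if d \<le> i \<and> p i < d then 1 else 0)"
    by (rule sum_mono) (use deg permutes_in_image[OF p] in auto)
  also have "\<dots> = card {i \<in> {0..<n}. d \<le> i \<and> p i < d}"
    by (simp add: sum.inter_filter[symmetric])
  also have "\<dots> \<le> card {0..<d}"
    by (rule card_inj_on_le[OF inj_on_subset[OF permutes_inj[OF p]]]) auto
  finally show "degree (signof p * (\<Prod>i = 0..<n. P $$ (i, p i))) \<le> d" by simp
qed (simp add: finite_permutations)

(* det [[1, B], [t E, M]] = det (M - t E B) by the Schur complement, and only the d columns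
   of t E depend on t. *)
lemma det_minus_smult_low_rank_poly:
  fixes M :: "'a :: field mat"
  assumes M: "M \<in> carrier_mat n n" and E: "E \<in> carrier_mat n d" and B: "B \<in> carrier_mat d n"
  obtains Q where "degree Q \<le> d" "\<And>t. poly Q t = det (M - t \<cdot>\<^sub>m (E * B))"
proof
  define P where "P = four_block_mat (map_mat (\<lambda>x. [:x:]) (1\<^sub>m d)) (map_mat (\<lambda>x. [:x:]) B)
     (map_mat (\<lambda>x. [:0, x:]) E) (map_mat (\<lambda>x. [:x:]) M)"
  have P: "P \<in> carrier_mat (d + n) (d + n)" unfolding P_def using M E B by auto
  show "degree (det P) \<le> d"
    by (rule degree_det_lower_left_linear_le[OF P]) (use M E B in \<open>auto simp: P_def\<close>)
  fix t
  have "map_mat (\<lambda>p. poly p t) P = four_block_mat (1 \<cdot>\<^sub>m 1\<^sub>m d) B (t \<cdot>\<^sub>m E) M"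
    unfolding P_def using M E B by (intro eq_matI) auto
  then have "poly (det P) t = det (four_block_mat (1 \<cdot>\<^sub>m 1\<^sub>m d) B (t \<cdot>\<^sub>m E) M)"
    by (metis comm_ring_hom.hom_det poly_hom.comm_ring_hom_axioms)
  also have "\<dots> = det (M - t \<cdot>\<^sub>m (E * B))"
    using det_four_block_mat_scalar_upper_left[OF M B, of "t \<cdot>\<^sub>m E" 1] E B
    by (simp add: mult_smult_assoc_mat[of _ n d _ n])
  finally show "poly (det P) t = det (M - t \<cdot>\<^sub>m (E * B))" .
qed

lemma Hmat_carrier_mat [simp]: "X \<in> carrier_mat n n \<Longrightarrow> Hmat X \<theta> \<in> carrier_mat n n"
  unfolding Hmat_def by auto

lemma dim_row_Hmat [simp]: "dim_row (Hmat X \<theta>) = dim_col X"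
  and dim_col_Hmat [simp]: "dim_col (Hmat X \<theta>) = dim_row X"
  unfolding Hmat_def by auto

lemma index_Hmat:
  assumes "X \<in> carrier_mat n n" "i < n" "j < n"
  shows "Hmat X \<theta> $$ (i, j) =
    (exp (- \<i> * of_real \<theta>) * X $$ (i, j) + exp (\<i> * of_real \<theta>) * cnj (X $$ (j, i))) / 2"
  unfolding Hmat_def using assms by auto

lemma defect_carrier_mat [simp]: "X \<in> carrier_mat n n \<Longrightarrow> defect X \<in> carrier_mat n n"
  unfolding defect_def by auto

lemma dim_row_defect [simp]: "dim_row (defect X) = dim_col X"
  and dim_col_defect [simp]: "dim_col (defect X) = dim_col X"
  unfolding defect_def by auto

lemma A_op_eq_four_block_mat:
  assumes "Y \<in> carrier_mat n n" "B \<in> carrier_mat m n"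
  shows "A_op B Y = four_block_mat (0\<^sub>m m m) B (0\<^sub>m n m) Y"
  unfolding A_op_def using assms by auto

lemma A_op_carrier_mat:
  assumes "Y \<in> carrier_mat n n" "B \<in> carrier_mat m n"
  shows "A_op B Y \<in> carrier_mat (m + n) (m + n)"
  unfolding A_op_eq_four_block_mat[OF assms] using assms by auto

lemma defect_A_op:
  assumes Y: "Y \<in> carrier_mat n n" and B: "B \<in> carrier_mat m n"
    and BB: "mat_adjoint B * B = defect Y"
  shows "defect (A_op B Y) = four_block_mat (1\<^sub>m m) (0\<^sub>m m n) (0\<^sub>m n m) (0\<^sub>m n n)"
proof -
  note X = A_op_eq_four_block_mat[OF Y B]
  have "mat_adjoint (A_op B Y) * A_op B Y =
      four_block_mat (0\<^sub>m m m) (0\<^sub>m m n) (mat_adjoint B) (mat_adjoint Y) * A_op B Y"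
    unfolding X using Y B by (subst mat_adjoint_four_block_mat[of _ m m _ n _ n]) auto
  also have "\<dots> = four_block_mat (0\<^sub>m m m) (0\<^sub>m m n) (0\<^sub>m n m) (mat_adjoint B * B + mat_adjoint Y * Y)"
    unfolding X using Y B
    by (subst mult_four_block_mat[of _ m m _ n _ n _ _ m _ n])
      (auto simp: left_mult_zero_mat[OF Y] left_mult_zero_mat[OF B])
  also have "mat_adjoint B * B + mat_adjoint Y * Y = 1\<^sub>m n"
    unfolding BB defect_def using Y by (intro eq_matI) auto
  finally show ?thesis
    unfolding defect_def using A_op_carrier_mat[OF Y B] by (intro eq_matI) auto
qed

definition pencil_det :: "complex mat \<Rightarrow> real \<Rightarrow> complex \<Rightarrow> complex \<Rightarrow> complex" where
  "pencil_det X \<theta> l a = det (l \<cdot>\<^sub>m 1\<^sub>m (dim_row X) - Hmat X \<theta> - a \<cdot>\<^sub>m defect X)"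

lemma pencil_matrix_A_op:
  assumes Y: "Y \<in> carrier_mat n n" and B: "B \<in> carrier_mat m n"
    and BB: "mat_adjoint B * B = defect Y"
  shows "l \<cdot>\<^sub>m 1\<^sub>m (m + n) - Hmat (A_op B Y) \<theta> - a \<cdot>\<^sub>m defect (A_op B Y) =
    four_block_mat ((l - a) \<cdot>\<^sub>m 1\<^sub>m m) ((- exp (- \<i> * of_real \<theta>) / 2) \<cdot>\<^sub>m B)
      ((- exp (\<i> * of_real \<theta>) / 2) \<cdot>\<^sub>m mat_adjoint B) (l \<cdot>\<^sub>m 1\<^sub>m n - Hmat Y \<theta>)"
    (is "?M = ?F")
proof (rule eq_matI)
  have X: "four_block_mat (0\<^sub>m m m) B (0\<^sub>m n m) Y \<in> carrier_mat (m + n) (m + n)"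
    using Y B by auto
  fix i j assume "i < dim_row ?F" "j < dim_col ?F"
  then have "i < m + n" "j < m + n" using Y B by auto
  then show "?M $$ (i, j) = ?F $$ (i, j)"
    unfolding defect_A_op[OF Y B BB] unfolding A_op_eq_four_block_mat[OF Y B] using Y B
    by (auto simp: index_Hmat[OF X] index_Hmat[OF Y] field_simps)
qed (use Y carrier_matD[OF A_op_carrier_mat[OF Y B]] in auto)

lemma pencil_det_A_op:
  assumes Y: "Y \<in> carrier_mat n n" and B: "B \<in> carrier_mat m n"
    and BB: "mat_adjoint B * B = defect Y" and "l \<noteq> a"
  shows "pencil_det (A_op B Y) \<theta> l a = (l - a) ^ m * pencil_det Y \<theta> l (1 / (4 * (l - a)))"
proof -
  define z where "z = exp (- \<i> * of_real \<theta>)"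
  define z' where "z' = exp (\<i> * of_real \<theta>)"
  have "z' * z = 1" unfolding z_def z'_def by (simp add: exp_add[symmetric])
  have HY: "l \<cdot>\<^sub>m 1\<^sub>m n - Hmat Y \<theta> \<in> carrier_mat n n"
    using Y by (simp add: minus_carrier_mat)
  have "pencil_det (A_op B Y) \<theta> l a = det (four_block_mat ((l - a) \<cdot>\<^sub>m 1\<^sub>m m) ((- z / 2) \<cdot>\<^sub>m B)
      ((- z' / 2) \<cdot>\<^sub>m mat_adjoint B) (l \<cdot>\<^sub>m 1\<^sub>m n - Hmat Y \<theta>))"
    unfolding pencil_det_def z_def z'_def pencil_matrix_A_op[OF Y B BB, symmetric]
    using carrier_matD[OF A_op_carrier_mat[OF Y B]] by simp
  also have "\<dots> = (l - a) ^ m * det (l \<cdot>\<^sub>m 1\<^sub>m n - Hmat Y \<theta> -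
      (1 / (l - a)) \<cdot>\<^sub>m (((- z' / 2) \<cdot>\<^sub>m mat_adjoint B) * ((- z / 2) \<cdot>\<^sub>m B)))"
    by (rule det_four_block_mat_scalar_upper_left[OF HY]) (use B \<open>l \<noteq> a\<close> in auto)
  also have "((- z' / 2) \<cdot>\<^sub>m mat_adjoint B) * ((- z / 2) \<cdot>\<^sub>m B) = (1 / 4) \<cdot>\<^sub>m defect Y"
    using B \<open>z' * z = 1\<close>
    by (simp add: mult_smult_assoc_mat[of _ n m _ n] mult_smult_distrib[of _ n m _ n] smult_smult_mat
        BB[symmetric] field_simps)
  finally show ?thesis
    unfolding pencil_det_def using Y by (simp add: smult_smult_mat mult.commute)
qed

lemma is_tower_SucE:
  assumes "is_tower C T" "T j \<in> carrier_mat n n"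
  obtains m B where "B \<in> carrier_mat m n" "mat_adjoint B * B = defect (T j)"
    "T (Suc j) = A_op B (T j)"
  using assms unfolding is_tower_def is_B_def Let_def by (metis carrier_matD(2))

lemma is_tower_carrier_mat:
  assumes "is_tower C T" "C \<in> carrier_mat n n"
  obtains N where "T j \<in> carrier_mat N N"
proof (induction j arbitrary: thesis)
  case 0
  then show ?case using assms unfolding is_tower_def by auto
next
  case (Suc j)
  obtain N where "T j \<in> carrier_mat N N" using Suc.IH by blast
  with is_tower_SucE[OF assms(1) this] A_op_carrier_mat show ?case
    by (metis Suc.prems)
qed

(* By pencil_det_A_op, going down one level of the tower replaces the weight a of the defect
   by tower_map r a, at the real point l = r. *)
definition tower_map :: "real \<Rightarrow> real \<Rightarrow> real" where
  "tower_map r x = 1 / (4 * (r - x))"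

lemma tower_map_bounds:
  assumes "1 \<le> r" "0 \<le> x" "x \<le> 1 / 2"
  shows "0 < tower_map r x" "tower_map r x \<le> 1 / 2"
  using assms unfolding tower_map_def by (auto simp: field_simps)

lemma tower_map_funpow_bounds:
  assumes "1 \<le> r" "0 \<le> x" "x \<le> 1 / 2"
  shows "0 \<le> (tower_map r ^^ j) x \<and> (tower_map r ^^ j) x \<le> 1 / 2"
  using assms by (induction j) (auto dest: tower_map_bounds[of r] intro: less_imp_le)

lemma tower_map_strict_mono:
  assumes "x < y" "y < r"
  shows "tower_map r x < tower_map r y"
  using assms unfolding tower_map_def by (simp add: divide_simps)

lemma strict_mono_tower_map_orbit:
  assumes "1 \<le> r"
  shows "strict_mono (\<lambda>j. (tower_map r ^^ j) 0)"
  unfolding strict_mono_Suc_iff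
proof
  fix j
  show "(tower_map r ^^ j) 0 < (tower_map r ^^ Suc j) 0"
  proof (induction j)
    case 0
    then show ?case using tower_map_bounds[OF assms, of 0] by simp
  next
    case (Suc j)
    moreover have "(tower_map r ^^ Suc j) 0 < r"
      using tower_map_funpow_bounds[OF assms, of 0 "Suc j"] assms by simp
    ultimately show ?case using tower_map_strict_mono by simp
  qed
qed

lemma pencil_det_tower:
  assumes T: "is_tower C T" and C: "C \<in> carrier_mat n n" and "1 \<le> r" "0 \<le> a" "a \<le> 1 / 2"
  shows "\<exists>h. h \<noteq> 0 \<and> (\<forall>\<theta>. pencil_det (T j) \<theta> r a = h * pencil_det C \<theta> r ((tower_map r ^^ j) a))"
  using assms(4,5)
proof (induction j arbitrary: a)
  case 0
  then show ?case using T unfolding is_tower_def by (intro exI[of _ 1]) auto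
next
  case (Suc j)
  obtain N where TN: "T j \<in> carrier_mat N N" using is_tower_carrier_mat[OF T C] .
  obtain m B where B: "B \<in> carrier_mat m N" "mat_adjoint B * B = defect (T j)"
    and TS: "T (Suc j) = A_op B (T j)"
    using is_tower_SucE[OF T TN] .
  have "complex_of_real r \<noteq> a" using Suc.prems \<open>1 \<le> r\<close> by auto
  have "0 \<le> tower_map r a" "tower_map r a \<le> 1 / 2"
    using tower_map_bounds[OF \<open>1 \<le> r\<close> Suc.prems] by auto
  then obtain h where "h \<noteq> 0"
    and h: "\<And>\<theta>. pencil_det (T j) \<theta> r (tower_map r a) =
      h * pencil_det C \<theta> r ((tower_map r ^^ j) (tower_map r a))"
    using Suc.IH by blast
  have weight: "1 / (4 * (complex_of_real r - a)) = tower_map r a"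
    unfolding tower_map_def by simp
  have "pencil_det (T (Suc j)) \<theta> r a =
      (r - a) ^ m * h * pencil_det C \<theta> r ((tower_map r ^^ Suc j) a)" for \<theta>
    unfolding TS pencil_det_A_op[OF TN B \<open>complex_of_real r \<noteq> a\<close>] weight h funpow_Suc_right
    by simp
  moreover have "(r - a) ^ m * h \<noteq> 0" using \<open>h \<noteq> 0\<close> \<open>complex_of_real r \<noteq> a\<close> by simp
  ultimately show ?case by blast
qed

lemma continuous_on_det:
  fixes M :: "'a :: topological_space \<Rightarrow> 'b :: real_normed_field mat"
  assumes "\<And>t. M t \<in> carrier_mat n n"
    and "\<And>i j. i < n \<Longrightarrow> j < n \<Longrightarrow> continuous_on S (\<lambda>t. M t $$ (i, j))"
  shows "continuous_on S (\<lambda>t. det (M t))"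
proof -
  have "continuous_on S (\<lambda>t. \<Sum>p \<in> {p. p permutes {0..<n}}. signof p * (\<Prod>i = 0..<n. M t $$ (i, p i)))"
    using assms(2) by (intro continuous_intros) (auto dest: permutes_in_image)
  then show ?thesis using det_def'[OF assms(1)] by simp
qed

lemma continuous_pencil_det:
  assumes X: "X \<in> carrier_mat n n"
  shows "continuous_on UNIV (\<lambda>\<theta>. pencil_det X \<theta> l a)"
  unfolding pencil_det_def
proof (rule continuous_on_det[where n = n])
  show "l \<cdot>\<^sub>m 1\<^sub>m (dim_row X) - Hmat X \<theta> - a \<cdot>\<^sub>m defect X \<in> carrier_mat n n" for \<theta>
    using X by (simp add: minus_carrier_mat)
  fix i j assume "i < n" "j < n"
  then have entry: "(\<lambda>\<theta>. (l \<cdot>\<^sub>m 1\<^sub>m (dim_row X) - Hmat X \<theta> - a \<cdot>\<^sub>m defect X) $$ (i, j)) =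
    (\<lambda>\<theta>. l * 1\<^sub>m n $$ (i, j) -
      (exp (- \<i> * of_real \<theta>) * X $$ (i, j) + exp (\<i> * of_real \<theta>) * cnj (X $$ (j, i))) / 2 -
      a * defect X $$ (i, j))"
    using X carrier_matD[OF defect_carrier_mat[OF X]] by (intro ext) (simp add: index_Hmat)
  show "continuous_on UNIV (\<lambda>\<theta>. (l \<cdot>\<^sub>m 1\<^sub>m (dim_row X) - Hmat X \<theta> - a \<cdot>\<^sub>m defect X) $$ (i, j))"
    unfolding entry by (intro continuous_intros) simp
qed

lemma continuous_finite_range_const_real:
  fixes g :: "real \<Rightarrow> real"
  assumes "continuous_on UNIV g" "finite (range g)"
  shows "g x = g y"
proof (rule ccontr)
  assume "g x \<noteq> g y"
  have "connected (range g)"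
    using connected_continuous_image[OF assms(1) connected_UNIV] .
  have "{min (g x) (g y)..max (g x) (g y)} \<subseteq> range g"
  proof
    fix z assume "z \<in> {min (g x) (g y)..max (g x) (g y)}"
    moreover have "min (g x) (g y) \<in> range g" "max (g x) (g y) \<in> range g"
      by (simp_all add: min_def max_def)
    ultimately show "z \<in> range g"
      by (auto intro: connectedD_interval[OF \<open>connected (range g)\<close>, of "min (g x) (g y)" "max (g x) (g y)"])
  qed
  moreover have "infinite {min (g x) (g y)..max (g x) (g y)}"
    using \<open>g x \<noteq> g y\<close> by (intro infinite_Icc) (simp add: min_def max_def)
  ultimately show False using assms(2) finite_subset by blast
qed

lemma continuous_finite_range_const:
  fixes f :: "real \<Rightarrow> complex"
  assumes "continuous_on UNIV f" "finite (range f)"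
  shows "f x = f y"
proof -
  have "finite (range (\<lambda>t. Re (f t)))" "finite (range (\<lambda>t. Im (f t)))"
    using finite_imageI[OF assms(2), of Re] finite_imageI[OF assms(2), of Im]
    by (simp_all add: image_image)
  then have "Re (f x) = Re (f y)" "Im (f x) = Im (f y)"
    using continuous_finite_range_const_real[OF continuous_on_Re[OF assms(1)]]
      continuous_finite_range_const_real[OF continuous_on_Im[OF assms(1)]] by blast+
  then show ?thesis by (simp add: complex_eq_iff)
qed

lemma pencil_det_0_eq_char_poly:
  assumes "X \<in> carrier_mat n n"
  shows "pencil_det X \<theta> l 0 = poly (char_poly (Hmat X \<theta>)) l"
proof -
  have "- char_matrix (Hmat X \<theta>) l = l \<cdot>\<^sub>m 1\<^sub>m (dim_row X) - Hmat X \<theta> - 0 \<cdot>\<^sub>m defect X"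
    unfolding char_matrix_def using assms carrier_matD[OF assms] by (intro eq_matI) auto
  then show ?thesis
    unfolding char_poly_matrix[OF Hmat_carrier_mat[OF assms]] pencil_det_def by simp
qed

lemma finite_spectrum_mat:
  assumes "A \<in> carrier_mat n n"
  shows "finite (spectrum_mat A)"
  unfolding spectrum_mat_def eigenvalue_root_char_poly[OF assms]
  by (rule poly_roots_finite) (use degree_monic_char_poly[OF assms] in auto)

lemma finite_char_polys_spectrum_subset:
  fixes S :: "complex set"
  assumes "finite S"
  shows "finite {char_poly A | A. A \<in> carrier_mat n n \<and> spectrum_mat A \<subseteq> S}"
proof (rule finite_subset)
  show "finite ((\<lambda>as. \<Prod>a\<leftarrow>as. [:- a, 1:]) ` {as. set as \<subseteq> S \<and> length as = n})"
    by (intro finite_imageI finite_lists_length_eq assms)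
  show "{char_poly A | A. A \<in> carrier_mat n n \<and> spectrum_mat A \<subseteq> S} \<subseteq>
    (\<lambda>as. \<Prod>a\<leftarrow>as. [:- a, 1:]) ` {as. set as \<subseteq> S \<and> length as = n}"
  proof safe
    fix A assume A: "A \<in> carrier_mat n n" "spectrum_mat A \<subseteq> S"
    obtain as where as: "char_poly A = (\<Prod>a\<leftarrow>as. [:- a, 1:])" "length as = n"
      using char_poly_factorized[OF A(1)] by blast
    have "set as \<subseteq> spectrum_mat A"
      unfolding spectrum_mat_def eigenvalue_root_char_poly[OF A(1)] as(1)
      by (auto simp: poly_prod_list prod_list_zero_iff)
    then show "char_poly A \<in> (\<lambda>as. \<Prod>a\<leftarrow>as. [:- a, 1:]) ` {as. set as \<subseteq> S \<and> length as = n}"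
      using as A(2) by auto
  qed
qed

(* The common spectrum only fixes the roots of the characteristic polynomials; their
   multiplicities are fixed because the polynomials depend continuously on theta. *)
lemma circularity_iff_char_poly_const:
  assumes X: "X \<in> carrier_mat n n"
  shows "circularity X \<longleftrightarrow> (\<forall>\<theta> \<theta>'. char_poly (Hmat X \<theta>) = char_poly (Hmat X \<theta>'))"
proof
  assume "circularity X"
  define S where "S = spectrum_mat (Hmat X 0)"
  have spec: "spectrum_mat (Hmat X \<theta>) = S" for \<theta>
    using \<open>circularity X\<close> unfolding circularity_def S_def by auto
  let ?P = "{char_poly A | A. A \<in> carrier_mat n n \<and> spectrum_mat A \<subseteq> S}"
  have "finite ?P"
    using finite_char_polys_spectrum_subset[OF finite_spectrum_mat[OF Hmat_carrier_mat[OF X]]]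
    unfolding S_def .
  have "pencil_det X \<theta> l 0 = pencil_det X \<theta>' l 0" for \<theta> \<theta>' l
  proof -
    have "range (\<lambda>\<theta>. pencil_det X \<theta> l 0) \<subseteq> (\<lambda>q. poly q l) ` ?P"
      unfolding pencil_det_0_eq_char_poly[OF X] using spec Hmat_carrier_mat[OF X] by blast
    then have "finite (range (\<lambda>\<theta>. pencil_det X \<theta> l 0))"
      using \<open>finite ?P\<close> finite_subset by blast
    then show ?thesis
      using continuous_finite_range_const[OF continuous_pencil_det[OF X]] by blast
  qed
  then show "\<forall>\<theta> \<theta>'. char_poly (Hmat X \<theta>) = char_poly (Hmat X \<theta>')"
    unfolding pencil_det_0_eq_char_poly[OF X] by (auto intro: poly_ext)
next
  assume "\<forall>\<theta> \<theta>'. char_poly (Hmat X \<theta>) = char_poly (Hmat X \<theta>')"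
  then show "circularity X"
    unfolding circularity_def spectrum_mat_def eigenvalue_root_char_poly[OF Hmat_carrier_mat[OF X]]
    by metis
qed

lemma poly_eqI_infinite:
  fixes p q :: "'a :: idom poly"
  assumes "infinite A" "\<And>x. x \<in> A \<Longrightarrow> poly p x = poly q x"
  shows "p = q"
proof -
  have "A \<subseteq> {x. poly (p - q) x = 0}" using assms(2) by auto
  then have "infinite {x. poly (p - q) x = 0}" using assms(1) finite_subset by blast
  then show ?thesis using poly_roots_finite[of "p - q"] by auto
qed

lemma circularity_iff_pencil_det_const:
  assumes X: "X \<in> carrier_mat n n"
  shows "circularity X \<longleftrightarrow>
    (\<forall>\<theta> \<theta>' (r :: real). 1 \<le> r \<longrightarrow> pencil_det X \<theta> (of_real r) 0 = pencil_det X \<theta>' (of_real r) 0)"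
proof
  assume "circularity X"
  then show
    "\<forall>\<theta> \<theta>' (r :: real). 1 \<le> r \<longrightarrow> pencil_det X \<theta> (of_real r) 0 = pencil_det X \<theta>' (of_real r) 0"
    unfolding circularity_iff_char_poly_const[OF X] pencil_det_0_eq_char_poly[OF X] by metis
next
  assume const:
    "\<forall>\<theta> \<theta>' (r :: real). 1 \<le> r \<longrightarrow> pencil_det X \<theta> (of_real r) 0 = pencil_det X \<theta>' (of_real r) 0"
  have "infinite (complex_of_real ` {1..})"
    using finite_imageD[of complex_of_real "{1..}"] infinite_Ici by (auto simp: inj_on_def)
  then have "char_poly (Hmat X \<theta>) = char_poly (Hmat X \<theta>')" for \<theta> \<theta>'
    using const by (intro poly_eqI_infinite) (auto simp: pencil_det_0_eq_char_poly[OF X])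
  then show "circularity X"
    unfolding circularity_iff_char_poly_const[OF X] by blast
qed

lemma pencil_det_poly:
  assumes C: "C \<in> carrier_mat n n" and B: "B \<in> carrier_mat d n" "mat_adjoint B * B = defect C"
  obtains Q where "degree Q \<le> d" "\<And>t. poly Q t = pencil_det C \<theta> l t"
proof -
  have "l \<cdot>\<^sub>m 1\<^sub>m n - Hmat C \<theta> \<in> carrier_mat n n" using C by (simp add: minus_carrier_mat)
  from det_minus_smult_low_rank_poly[OF this mat_adjoint_carrier_mat[OF B(1)] B(1)]
  obtain Q where "degree Q \<le> d" "\<And>t. poly Q t = det (l \<cdot>\<^sub>m 1\<^sub>m n - Hmat C \<theta> - t \<cdot>\<^sub>m defect C)"
    unfolding B(2) by blast
  with that show ?thesis unfolding pencil_det_def using C by simp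
qed

lemma circularity_tower_iff:
  assumes T: "is_tower C T" and C: "C \<in> carrier_mat n n"
  shows "circularity (T j) \<longleftrightarrow> (\<forall>\<theta> \<theta>' (r :: real). 1 \<le> r \<longrightarrow>
    pencil_det C \<theta> r ((tower_map r ^^ j) 0) = pencil_det C \<theta>' r ((tower_map r ^^ j) 0))"
proof -
  obtain N where TN: "T j \<in> carrier_mat N N" using is_tower_carrier_mat[OF T C] .
  have "pencil_det (T j) \<theta> r 0 = pencil_det (T j) \<theta>' r 0 \<longleftrightarrow>
      pencil_det C \<theta> r ((tower_map r ^^ j) 0) = pencil_det C \<theta>' r ((tower_map r ^^ j) 0)"
    if r: "1 \<le> r" for \<theta> \<theta>' r
  proof -
    obtain h where "h \<noteq> 0"
      "\<forall>\<theta>. pencil_det (T j) \<theta> r 0 = h * pencil_det C \<theta> r ((tower_map r ^^ j) 0)"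
      using pencil_det_tower[OF T C r, of 0 j] by auto
    then show ?thesis by simp
  qed
  then show ?thesis unfolding circularity_iff_pencil_det_const[OF TN] by auto
qed

lemma circularity_tower_all_iff:
  assumes T: "is_tower C T" and C: "C \<in> carrier_mat n n" and d: "d = vec_space.rank n (defect C)"
    and J: "finite J" "card J = d + 1"
  shows "(\<forall>j. circularity (T j)) \<longleftrightarrow> (\<forall>j \<in> J. circularity (T j))"
proof
  assume circ_J: "\<forall>j \<in> J. circularity (T j)"
  obtain B where "is_B C B" using T unfolding is_tower_def by metis
  then have B: "B \<in> carrier_mat d n" "mat_adjoint B * B = defect C"
    using carrier_matD[OF C] d unfolding is_B_def Let_def by auto
  have "pencil_det C \<theta> r ((tower_map r ^^ j) 0) = pencil_det C \<theta>' r ((tower_map r ^^ j) 0)"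
    if r: "1 \<le> r" for \<theta> \<theta>' j r
  proof -
    define orbit where "orbit k = complex_of_real ((tower_map r ^^ k) 0)" for k
    obtain Q where Q: "degree Q \<le> d" "\<And>t. poly Q t = pencil_det C \<theta> r t"
      using pencil_det_poly[OF C B] by metis
    obtain Q' where Q': "degree Q' \<le> d" "\<And>t. poly Q' t = pencil_det C \<theta>' r t"
      using pencil_det_poly[OF C B] by metis
    have "inj orbit"
      using strict_mono_eq[OF strict_mono_tower_map_orbit[OF r]] unfolding inj_def orbit_def by simp
    then have "card (orbit ` J) = d + 1"
      using J by (simp add: card_image inj_on_subset)
    moreover have "poly Q x = poly Q' x" if "x \<in> orbit ` J" for x
      using that circ_J r unfolding Q Q' orbit_def circularity_tower_iff[OF T C] by auto
    ultimately have "Q = Q'"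
      using Q(1) Q'(1) by (intro poly_eqI_degree[of "orbit ` J"]) auto
    then show ?thesis using Q(2) Q'(2) by metis
  qed
  then show "\<forall>j. circularity (T j)"
    unfolding circularity_tower_iff[OF T C] by blast
qed simp

theorem mainTheorem5:
  fixes C :: "complex mat" and n d :: nat and T :: "nat \<Rightarrow> complex mat"
  assumes "C \<in> carrier_mat n n"
    and "contraction C"
    and "d = vec_space.rank n (1\<^sub>m n - mat_adjoint C * C)"
    and "is_tower C T"
  shows "((\<forall>j. circularity (T j)) \<longleftrightarrow> (\<forall>j\<in>{1..d+1}. circularity (T j)))
       \<and> ((\<forall>j. circularity (T j)) \<longleftrightarrow> (\<forall>j\<in>{0..d}. circularity (T j)))"
proof -
  have d: "d = vec_space.rank n (defect C)"
    using assms(1,3) unfolding defect_def by simp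
  show ?thesis
    using circularity_tower_all_iff[OF assms(4,1) d, of "{1..d+1}"]
      circularity_tower_all_iff[OF assms(4,1) d, of "{0..d}"]
    by simp
qed

end
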